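(* Let $\Omega$ be a causal order on a finite set $E$ and $\underline I=(I_\omega)_{\omega\in E}$ a family of non-empty finite sets. The space of input histories $\mathrm{Hist}(\Omega,\underline I)$ is tight.
   Context: A causal order on $E$ is a preorder $\le_\Omega$; $\downarrow\omega=\{\xi:\xi\le_\Omega\omega\}$. $\mathrm{Hist}(\Omega,\underline I)=\bigcup_{\xi\in E}\prod_{\omega\in\downarrow\xi}I_\omega$, a set of partial functions ordered by restriction ($f\le g$ iff $\mathrm{dom}(f)\subseteq\mathrm{dom}(g)$ and $g|_{\mathrm{dom}(f)}=f$). Compatible = agreeing on common domain; compatible $\mathcal F$ has join $\bigvee\mathcal F$ (union). For a space $\Theta$: $\mathrm{Ext}(\Theta)=\{\bigvee\mathcal F:\emptyset\ne\mathcal F\subseteq\Theta\text{ compatible}\}$, $\mathrm{tips}_\Theta(h)=\mathrm{dom}(h)\setminus\bigcup\{\mathrm{dom}(k):k\in\mathrm{Ext}(\Theta),k<h\}$. $\Theta$ is tight if for every $k\in\mathrm{Ext}(\Theta)$ and every $\omega\in\mathrm{dom}(k)$ there is a unique $h\in\Theta$ with $h\le k$ and $\omega\in\mathrm{tips}_\Theta(h)$. *)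

theory Defs
  imports Main
begin

text \<open>Partial functions are modelled as maps \<open>'e \<rightharpoonup> 'i\<close>; the restriction order
  \<open>f \<le> g\<close> is \<open>f \<subseteq>\<^sub>m g\<close>.\<close>

definition causal_order :: "'e set \<Rightarrow> ('e \<Rightarrow> 'e \<Rightarrow> bool) \<Rightarrow> bool" where
  "causal_order E le \<longleftrightarrow> (\<forall>x\<in>E. le x x) \<and>
     (\<forall>x\<in>E. \<forall>y\<in>E. \<forall>z\<in>E. le x y \<longrightarrow> le y z \<longrightarrow> le x z)"

definition down :: "'e set \<Rightarrow> ('e \<Rightarrow> 'e \<Rightarrow> bool) \<Rightarrow> 'e \<Rightarrow> 'e set" where
  "down E le w = {x\<in>E. le x w}"

definition Hist :: "'e set \<Rightarrow> ('e \<Rightarrow> 'e \<Rightarrow> bool) \<Rightarrow> ('e \<Rightarrow> 'i set) \<Rightarrow> ('e \<rightharpoonup> 'i) set" where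
  "Hist E le I = {f. \<exists>\<xi>\<in>E. dom f = down E le \<xi> \<and>
                       (\<forall>w\<in>down E le \<xi>. \<exists>i\<in>I w. f w = Some i)}"

definition map_less :: "('e \<rightharpoonup> 'i) \<Rightarrow> ('e \<rightharpoonup> 'i) \<Rightarrow> bool" where
  "map_less f g \<longleftrightarrow> f \<subseteq>\<^sub>m g \<and> f \<noteq> g"

definition compatible :: "('e \<rightharpoonup> 'i) set \<Rightarrow> bool" where
  "compatible F \<longleftrightarrow> (\<forall>f\<in>F. \<forall>g\<in>F. \<forall>x\<in>dom f \<inter> dom g. f x = g x)"

definition mjoin :: "('e \<rightharpoonup> 'i) set \<Rightarrow> ('e \<rightharpoonup> 'i)" where
  "mjoin F = (\<lambda>x. if \<exists>f\<in>F. x \<in> dom f then (SOME f. f \<in> F \<and> x \<in> dom f) x else None)"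

definition Ext :: "('e \<rightharpoonup> 'i) set \<Rightarrow> ('e \<rightharpoonup> 'i) set" where
  "Ext \<Theta> = {mjoin F | F. F \<noteq> {} \<and> F \<subseteq> \<Theta> \<and> compatible F}"

definition tips :: "('e \<rightharpoonup> 'i) set \<Rightarrow> ('e \<rightharpoonup> 'i) \<Rightarrow> 'e set" where
  "tips \<Theta> h = dom h - \<Union>{dom k | k. k \<in> Ext \<Theta> \<and> map_less k h}"

definition tight :: "('e \<rightharpoonup> 'i) set \<Rightarrow> bool" where
  "tight \<Theta> \<longleftrightarrow> (\<forall>k\<in>Ext \<Theta>. \<forall>w\<in>dom k. \<exists>!h. h \<in> \<Theta> \<and> h \<subseteq>\<^sub>m k \<and> w \<in> tips \<Theta> h)"

end

theory Submission
  imports Defs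
begin

text \<open>A point \<open>w\<close> is a tip of a history \<open>h\<close> exactly when \<open>dom h = \<down>w\<close>: every history
  containing \<open>w\<close> contains all of \<open>\<down>w\<close>, so the restriction of \<open>h\<close> to \<open>\<down>w\<close> is a history
  strictly below \<open>h\<close> unless \<open>dom h = \<down>w\<close>. Hence for \<open>w \<in> dom k\<close> the only candidate is the
  restriction of \<open>k\<close> to \<open>\<down>w\<close>, and it is a history because \<open>w\<close> lies in the domain of
  one of the histories whose join is \<open>k\<close>.\<close>

lemma map_le_imp_eq_restrict: "f \<subseteq>\<^sub>m g \<Longrightarrow> f = g |` dom f"
  by (auto simp: map_le_def restrict_map_def fun_eq_iff)

lemma map_le_eq_if_dom_le:
  assumes "f \<subseteq>\<^sub>m g" "dom g \<subseteq> dom f"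
  shows "f = g"
  using assms by (auto simp: map_le_def fun_eq_iff) (metis domIff subsetD)

lemma compatible_mjoin_eq:
  assumes "compatible F" "f \<in> F" "x \<in> dom f"
  shows "mjoin F x = f x"
proof -
  have "mjoin F x = (SOME f. f \<in> F \<and> x \<in> dom f) x"
    using assms(2,3) unfolding mjoin_def by auto
  also have "\<dots> = f x"
    by (rule someI2[of "\<lambda>f. f \<in> F \<and> x \<in> dom f" f]) (use assms in \<open>auto simp: compatible_def\<close>)
  finally show ?thesis .
qed

lemma dom_mjoin: "dom (mjoin F) = (\<Union>f\<in>F. dom f)"
proof (intro equalityI subsetI)
  fix x assume "x \<in> (\<Union>f\<in>F. dom f)"
  then have covered: "\<exists>f\<in>F. x \<in> dom f" by blast
  then have "x \<in> dom (SOME f. f \<in> F \<and> x \<in> dom f)" by (rule someI2_bex) blast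
  with covered show "x \<in> dom (mjoin F)" unfolding mjoin_def by (simp add: dom_def)
qed (auto simp: mjoin_def split: if_splits)

lemma map_le_mjoin: "compatible F \<Longrightarrow> f \<in> F \<Longrightarrow> f \<subseteq>\<^sub>m mjoin F"
  using compatible_mjoin_eq unfolding map_le_def by metis

lemma mjoin_singleton: "mjoin {h} = h"
  by (rule sym, rule map_le_eq_if_dom_le) (auto simp: map_le_mjoin compatible_def dom_mjoin)

lemma subset_Ext: "\<Theta> \<subseteq> Ext \<Theta>"
proof
  fix h assume "h \<in> \<Theta>"
  then have "{h} \<noteq> {} \<and> {h} \<subseteq> \<Theta> \<and> compatible {h}" unfolding compatible_def by simp
  then show "h \<in> Ext \<Theta>" unfolding Ext_def by (metis (mono_tags, lifting) mem_Collect_eq mjoin_singleton)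
qed

lemma Ext_dom_cover:
  assumes "k \<in> Ext \<Theta>" "w \<in> dom k"
  obtains g where "g \<in> \<Theta>" "g \<subseteq>\<^sub>m k" "w \<in> dom g"
proof -
  from assms(1) obtain F where "F \<subseteq> \<Theta>" "compatible F" "k = mjoin F"
    unfolding Ext_def by blast
  with assms(2) show ?thesis using that map_le_mjoin by (auto simp: dom_mjoin)
qed

lemma mem_tips_iff:
  "w \<in> tips \<Theta> h \<longleftrightarrow> w \<in> dom h \<and> (\<forall>g\<in>\<Theta>. g \<subseteq>\<^sub>m h \<and> w \<in> dom g \<longrightarrow> g = h)"
proof
  assume "w \<in> tips \<Theta> h"
  then show "w \<in> dom h \<and> (\<forall>g\<in>\<Theta>. g \<subseteq>\<^sub>m h \<and> w \<in> dom g \<longrightarrow> g = h)"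
    using subset_Ext unfolding tips_def map_less_def by blast
next
  assume tip: "w \<in> dom h \<and> (\<forall>g\<in>\<Theta>. g \<subseteq>\<^sub>m h \<and> w \<in> dom g \<longrightarrow> g = h)"
  have "w \<notin> dom k" if "k \<in> Ext \<Theta>" "map_less k h" for k
  proof
    assume "w \<in> dom k"
    with \<open>k \<in> Ext \<Theta>\<close> obtain g where "g \<in> \<Theta>" "g \<subseteq>\<^sub>m k" "w \<in> dom g"
      by (rule Ext_dom_cover)
    moreover have "k \<subseteq>\<^sub>m h" "k \<noteq> h" using \<open>map_less k h\<close> unfolding map_less_def by auto
    ultimately have "g = h" using tip map_le_trans by blast
    with \<open>g \<subseteq>\<^sub>m k\<close> \<open>k \<subseteq>\<^sub>m h\<close> \<open>k \<noteq> h\<close> show False using map_le_antisym by blast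
  qed
  with tip show "w \<in> tips \<Theta> h" unfolding tips_def by blast
qed

lemma mem_down_self: "causal_order E le \<Longrightarrow> w \<in> E \<Longrightarrow> w \<in> down E le w"
  unfolding causal_order_def down_def by blast

lemma down_subset_down:
  assumes "causal_order E le" "\<xi> \<in> E" "w \<in> down E le \<xi>"
  shows "down E le w \<subseteq> down E le \<xi>"
  using assms unfolding causal_order_def down_def by blast

lemma Hist_dom_subset: "h \<in> Hist E le I \<Longrightarrow> dom h \<subseteq> E"
  unfolding Hist_def down_def by auto

lemma Hist_down_subset_dom:
  assumes "causal_order E le" "h \<in> Hist E le I" "w \<in> dom h"
  shows "down E le w \<subseteq> dom h"
proof -
  from assms(2) obtain \<xi> where "\<xi> \<in> E" "dom h = down E le \<xi>" unfolding Hist_def by blast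
  with assms(1,3) show ?thesis using down_subset_down by metis
qed

lemma restrict_down_in_Hist:
  assumes "causal_order E le" "h \<in> Hist E le I" "w \<in> dom h"
  shows "h |` down E le w \<in> Hist E le I"
proof -
  from assms(2) obtain \<xi> where "dom h = down E le \<xi>"
    and h_vals: "\<forall>x\<in>down E le \<xi>. \<exists>i\<in>I x. h x = Some i"
    unfolding Hist_def by blast
  have "down E le w \<subseteq> dom h" using Hist_down_subset_dom[OF assms] .
  moreover have "w \<in> E" using Hist_dom_subset[OF assms(2)] assms(3) by blast
  ultimately show ?thesis
    using h_vals \<open>dom h = down E le \<xi>\<close> unfolding Hist_def by (auto intro!: bexI[of _ w])
qed

lemma Hist_tips_iff:
  assumes "causal_order E le" "h \<in> Hist E le I"
  shows "w \<in> tips (Hist E le I) h \<longleftrightarrow> w \<in> E \<and> dom h = down E le w"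
proof
  assume "w \<in> tips (Hist E le I) h"
  then have w: "w \<in> dom h"
    and minimal: "\<And>g. g \<in> Hist E le I \<Longrightarrow> g \<subseteq>\<^sub>m h \<Longrightarrow> w \<in> dom g \<Longrightarrow> g = h"
    unfolding mem_tips_iff by blast+
  have "w \<in> E" using Hist_dom_subset[OF assms(2)] w by blast
  then have "w \<in> dom (h |` down E le w)" using mem_down_self[OF assms(1)] w by simp
  then have "h |` down E le w = h"
    using minimal restrict_down_in_Hist[OF assms w] by (simp add: map_le_def)
  then have "dom h = dom h \<inter> down E le w" by (metis dom_restrict)
  with \<open>w \<in> E\<close> Hist_down_subset_dom[OF assms w] show "w \<in> E \<and> dom h = down E le w" by blast
next
  assume w: "w \<in> E \<and> dom h = down E le w"
  show "w \<in> tips (Hist E le I) h"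
    unfolding mem_tips_iff
  proof (intro conjI ballI impI)
    show "w \<in> dom h" using w mem_down_self[OF assms(1)] by simp
    fix g assume "g \<in> Hist E le I" "g \<subseteq>\<^sub>m h \<and> w \<in> dom g"
    then have "dom h \<subseteq> dom g" using w Hist_down_subset_dom[OF assms(1) \<open>g \<in> Hist E le I\<close>] by simp
    with \<open>g \<subseteq>\<^sub>m h \<and> w \<in> dom g\<close> show "g = h" using map_le_eq_if_dom_le by blast
  qed
qed

theorem proposition23:
  fixes E :: "'e set" and le :: "'e \<Rightarrow> 'e \<Rightarrow> bool" and I :: "'e \<Rightarrow> 'i set"
  assumes "finite E"
    and "causal_order E le"
    and "\<And>w. w \<in> E \<Longrightarrow> I w \<noteq> {} \<and> finite (I w)"
  shows "tight (Hist E le I)"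
  unfolding tight_def
proof (intro ballI)
  fix k w assume "k \<in> Ext (Hist E le I)" "w \<in> dom k"
  then obtain f where f: "f \<in> Hist E le I" "f \<subseteq>\<^sub>m k" "w \<in> dom f"
    by (rule Ext_dom_cover)
  define h where "h = f |` down E le w"
  have h: "h \<in> Hist E le I" "h \<subseteq>\<^sub>m k"
    using restrict_down_in_Hist[OF assms(2) f(1,3)] map_le_trans[OF _ f(2)]
    by (auto simp: h_def map_le_def)
  have "w \<in> E" using Hist_dom_subset[OF f(1)] f(3) by blast
  moreover have "dom h = down E le w"
    using Hist_down_subset_dom[OF assms(2) f(1,3)] by (auto simp: h_def)
  ultimately have "w \<in> tips (Hist E le I) h" using Hist_tips_iff[OF assms(2) h(1)] by blast
  moreover have "h' = h" if "h' \<in> Hist E le I" "h' \<subseteq>\<^sub>m k" "w \<in> tips (Hist E le I) h'" for h'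
  proof -
    have "dom h' = dom h" using that(3) Hist_tips_iff[OF assms(2) that(1)] \<open>dom h = _\<close> by simp
    then show "h' = h" using map_le_imp_eq_restrict that(2) h(2) by metis
  qed
  ultimately show "\<exists>!h. h \<in> Hist E le I \<and> h \<subseteq>\<^sub>m k \<and> w \<in> tips (Hist E le I) h"
    using h by blast
qed

end
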